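(* Let $p_\theta$ be a language model over $\Sigma$ depending differentiably on $\theta\in\mathbb{R}^d$ and $q$ a fixed language model over $\Sigma$ with $\mathrm{KL}(p_\theta\|q)<\infty$. Let $Y^{(1)},\dots,Y^{(M)}$ be i.i.d. samples from $p_\theta$ with eos-padded versions $\bar Y^{(m)}$. Define $$\widehat{\nabla}_{\mathrm{MC}}^{\le N}=\sum_{n=1}^N\frac1M\sum_{m=1}^M\log\frac{\overrightarrow{p}_\theta(\bar Y^{(m)}_n\mid\bar Y^{(m)}_{<n})}{\overrightarrow{q}(\bar Y^{(m)}_n\mid\bar Y^{(m)}_{<n})}\,\nabla_\theta\log\overrightarrow{p}_\theta(\bar Y^{(m)}_{\le N})$$ and $\widehat{\nabla}_{\mathrm{MC}}=\frac1M\sum_{m=1}^M\log\frac{p_\theta(Y^{(m)})}{q(Y^{(m)})}\nabla_\theta\log p_\theta(Y^{(m)})$. Then $\lim_{N\to\infty}\widehat{\nabla}_{\mathrm{MC}}^{\le N}=\widehat{\nabla}_{\mathrm{MC}}$.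
   Context: $\Sigma$ is a finite non-empty alphabet, $\mathrm{eos}\notin\Sigma$, $\bar\Sigma=\Sigma\cup\{\mathrm{eos}\}$. A language model $p$ is a distribution over $\Sigma^*$; $\overrightarrow{p}(x)=\sum_{y\in\Sigma^*}p(xy)$, $\overrightarrow{p}(a\mid x)=\overrightarrow{p}(xa)/\overrightarrow{p}(x)$ for $a\in\Sigma$, $\overrightarrow{p}(\mathrm{eos}\mid x)=p(x)/\overrightarrow{p}(x)$. The eos-padded version $\bar Y$ of $Y\in\Sigma^*$ is $Y$ followed by infinitely many eos symbols; for a sequence $x\notin\Sigma^*$, $\overrightarrow{p}(a\mid x)=\mathbb{1}\{a=\mathrm{eos}\}$ (likewise for $q$). For a finite padded prefix, $\overrightarrow{p}(\bar y_{\le n})=\prod_{k=1}^n\overrightarrow{p}(\bar y_k\mid\bar y_{<k})$. Natural logarithm. *)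

theory Defs
  imports "HOL-Analysis.Analysis"
begin

text \<open>Alphabet: a finite type 'a. Strings: 'a list. The extended alphabet
  \<Sigma> \<union> {eos} is 'a option, with None = eos.\<close>

definition lang_model :: "('a::finite list \<Rightarrow> real) \<Rightarrow> bool" where
  "lang_model p \<longleftrightarrow> (\<forall>y. 0 \<le> p y) \<and> (p has_sum 1) UNIV"

definition prefix_prob :: "('a list \<Rightarrow> real) \<Rightarrow> 'a list \<Rightarrow> real" where
  "prefix_prob p x = (\<Sum>\<^sub>\<infinity>y\<in>UNIV. p (x @ y))"

definition cond_prob :: "('a list \<Rightarrow> real) \<Rightarrow> 'a option list \<Rightarrow> 'a option \<Rightarrow> real" where
  "cond_prob p xs a =
     (if None \<notin> set xs then
        (let x = map the xs in
          (case a of None \<Rightarrow> p x / prefix_prob p x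
                   | Some b \<Rightarrow> prefix_prob p (x @ [b]) / prefix_prob p x))
      else (if a = None then 1 else 0))"

text \<open>eos-padded version of Y, 1-indexed: ybar Y n for n \<ge> 1.\<close>
definition ybar :: "'a list \<Rightarrow> nat \<Rightarrow> 'a option" where
  "ybar Y n = (if 1 \<le> n \<and> n \<le> length Y then Some (Y ! (n - 1)) else None)"

definition ybar_lt :: "'a list \<Rightarrow> nat \<Rightarrow> 'a option list" where
  "ybar_lt Y n = map (ybar Y) [1..<n]"

definition padded_prefix_prob :: "('a list \<Rightarrow> real) \<Rightarrow> 'a list \<Rightarrow> nat \<Rightarrow> real" where
  "padded_prefix_prob p Y N = (\<Prod>k = 1..N. cond_prob p (ybar_lt Y k) (ybar Y k))"

text \<open>KL(p || q) = sum_y p(y) ln(p(y)/q(y)) < \<infinity> (with p ln(p/0) = \<infinity> for p > 0).\<close>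
definition kl_finite :: "('a list \<Rightarrow> real) \<Rightarrow> ('a list \<Rightarrow> real) \<Rightarrow> bool" where
  "kl_finite p q \<longleftrightarrow> (\<forall>y. 0 < p y \<longrightarrow> 0 < q y) \<and>
                      (\<lambda>y. p y * ln (p y / q y)) summable_on UNIV"

definition grad :: "('d::real_inner \<Rightarrow> real) \<Rightarrow> 'd \<Rightarrow> 'd" where
  "grad f x = (THE g. GDERIV f x :> g)"

definition mc_grad_trunc ::
  "('d::real_inner \<Rightarrow> 'a list \<Rightarrow> real) \<Rightarrow> ('a list \<Rightarrow> real) \<Rightarrow> 'd \<Rightarrow> nat \<Rightarrow> (nat \<Rightarrow> 'a list) \<Rightarrow> nat \<Rightarrow> 'd" where
  "mc_grad_trunc p q \<theta> M Y N =
     (\<Sum>n = 1..N. (1 / real M) *\<^sub>R (\<Sum>m = 1..M.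
        ln (cond_prob (p \<theta>) (ybar_lt (Y m) n) (ybar (Y m) n)
            / cond_prob q (ybar_lt (Y m) n) (ybar (Y m) n))
        *\<^sub>R grad (\<lambda>\<theta>'. ln (padded_prefix_prob (p \<theta>') (Y m) N)) \<theta>))"

definition mc_grad ::
  "('d::real_inner \<Rightarrow> 'a list \<Rightarrow> real) \<Rightarrow> ('a list \<Rightarrow> real) \<Rightarrow> 'd \<Rightarrow> nat \<Rightarrow> (nat \<Rightarrow> 'a list) \<Rightarrow> 'd" where
  "mc_grad p q \<theta> M Y =
     (1 / real M) *\<^sub>R (\<Sum>m = 1..M.
        ln (p \<theta> (Y m) / q (Y m)) *\<^sub>R grad (\<lambda>\<theta>'. ln (p \<theta>' (Y m))) \<theta>)"

end

theory Submission
  imports Defs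
begin

text \<open>Once N exceeds the length of a sample Y, the product of the first N eos-padded
  conditionals telescopes to p(Y): the factors up to position |Y| telescope to the prefix
  probability of Y, the factor at |Y| + 1 turns it into p(Y), and all later factors are 1.
  Hence the sum of the first N log-ratios is log (p(Y) / q(Y)), and the padded prefix
  probability agrees with p_\<theta>'(Y) for every \<theta>', so its gradient is that of log p_\<theta>(Y).
  The truncated estimator is therefore eventually equal to the full one.\<close>

lemma lang_model_nonneg: "lang_model p \<Longrightarrow> 0 \<le> p y"
  unfolding lang_model_def by auto

lemma lang_model_summable_on_append:
  assumes "lang_model p"
  shows "(\<lambda>y. p (x @ y)) summable_on A"
proof -
  have "p summable_on UNIV"
    using assms unfolding lang_model_def by (auto simp: summable_on_def)
  then have "p summable_on range (append x)"
    using summable_on_subset_banach by blast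
  then have "(p \<circ> append x) summable_on UNIV"
    by (subst (asm) summable_on_reindex) (auto simp: inj_def)
  then show ?thesis
    using summable_on_subset_banach by (force simp: o_def)
qed

lemma prefix_prob_nonneg: "lang_model p \<Longrightarrow> 0 \<le> prefix_prob p x"
  unfolding prefix_prob_def by (rule infsum_nonneg) (simp add: lang_model_nonneg)

lemma prefix_prob_Nil: "lang_model p \<Longrightarrow> prefix_prob p [] = 1"
  unfolding prefix_prob_def lang_model_def by (auto intro: infsumI)

lemma le_prefix_prob:
  assumes "lang_model p"
  shows "p (x @ y) \<le> prefix_prob p x"
proof -
  have "infsum (\<lambda>y. p (x @ y)) {y} \<le> infsum (\<lambda>y. p (x @ y)) UNIV"
    by (rule infsum_mono_neutral)
      (auto simp: lang_model_summable_on_append[OF assms] lang_model_nonneg[OF assms])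
  then show ?thesis
    by (simp add: prefix_prob_def)
qed

lemma prefix_prob_append_le:
  assumes "lang_model p"
  shows "prefix_prob p (x @ y) \<le> prefix_prob p x"
proof -
  have "prefix_prob p (x @ y) = infsum ((\<lambda>z. p (x @ z)) \<circ> append y) UNIV"
    by (simp add: prefix_prob_def o_def)
  also have "\<dots> = infsum (\<lambda>z. p (x @ z)) (range (append y))"
    by (subst infsum_reindex) (auto simp: inj_def)
  also have "\<dots> \<le> infsum (\<lambda>z. p (x @ z)) UNIV"
    by (rule infsum_mono_neutral)
      (auto simp: lang_model_summable_on_append[OF assms] lang_model_nonneg[OF assms])
  finally show ?thesis
    by (simp add: prefix_prob_def)
qed

lemma ybar_lt_eq_map_take: "k \<le> Suc (length Y) \<Longrightarrow> ybar_lt Y k = map Some (take (k - 1) Y)"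
proof (induction k)
  case 0
  then show ?case by (simp add: ybar_lt_def)
next
  case (Suc k)
  show ?case
  proof (cases k)
    case 0
    then show ?thesis by (simp add: ybar_lt_def)
  next
    case (Suc j)
    have "ybar_lt Y (Suc k) = ybar_lt Y k @ [ybar Y k]"
      using Suc by (simp add: ybar_lt_def)
    also have "\<dots> = map Some (take j Y) @ [Some (Y ! j)]"
      using Suc.IH Suc.prems Suc by (simp add: ybar_def)
    also have "\<dots> = map Some (take k Y)"
      using Suc.prems Suc by (simp add: take_Suc_conv_app_nth)
    finally show ?thesis by simp
  qed
qed

lemma None_in_ybar_lt: "Suc (length Y) < k \<Longrightarrow> None \<in> set (ybar_lt Y k)"
  unfolding ybar_lt_def ybar_def
  by (auto simp: image_iff intro!: bexI[of _ "Suc (length Y)"])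

lemma cond_prob_ybar_within:
  assumes "1 \<le> k" "k \<le> length Y"
  shows "cond_prob p (ybar_lt Y k) (ybar Y k)
    = prefix_prob p (take k Y) / prefix_prob p (take (k - 1) Y)"
proof -
  have "take (k - 1) Y @ [Y ! (k - 1)] = take k Y"
    using assms by (metis Suc_diff_1 diff_less less_le_trans zero_less_one take_Suc_conv_app_nth)
  then show ?thesis
    using assms by (simp add: cond_prob_def ybar_lt_eq_map_take ybar_def o_def)
qed

lemma cond_prob_ybar_eos:
  "cond_prob p (ybar_lt Y (Suc (length Y))) (ybar Y (Suc (length Y))) = p Y / prefix_prob p Y"
  by (simp add: cond_prob_def ybar_lt_eq_map_take ybar_def o_def)

lemma cond_prob_ybar_after_eos:
  "Suc (length Y) < k \<Longrightarrow> cond_prob p (ybar_lt Y k) (ybar Y k) = 1"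
  using None_in_ybar_lt[of Y k] by (simp add: cond_prob_def ybar_def)

lemma cond_prob_ybar_pos:
  assumes "lang_model p" "0 < p Y" "1 \<le> k"
  shows "0 < cond_prob p (ybar_lt Y k) (ybar Y k)"
proof -
  have prefix_pos: "0 < prefix_prob p (take j Y)" for j
    using le_prefix_prob[OF assms(1), of "take j Y" "drop j Y"] assms(2) by simp
  consider "k \<le> length Y" | "k = Suc (length Y)" | "Suc (length Y) < k"
    by linarith
  then show ?thesis
  proof cases
    case 1
    then show ?thesis using assms(3) prefix_pos by (simp add: cond_prob_ybar_within)
  next
    case 2
    then show ?thesis using prefix_pos[of "length Y"] assms(2) by (simp add: cond_prob_ybar_eos)
  next
    case 3
    then show ?thesis by (simp add: cond_prob_ybar_after_eos)
  qed
qed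

text \<open>Handles the junk case x / 0 = 0: a conditional after a prefix of probability zero.\<close>
lemma mult_divide_cancel_of_le:
  fixes a b :: real
  assumes "0 \<le> b" "b \<le> a"
  shows "a * (b / a) = b"
  using assms by (cases "a = 0") auto

lemma padded_prefix_prob_within:
  assumes "lang_model p" "N \<le> length Y"
  shows "padded_prefix_prob p Y N = prefix_prob p (take N Y)"
  using assms(2)
proof (induction N)
  case 0
  then show ?case by (simp add: padded_prefix_prob_def prefix_prob_Nil[OF assms(1)])
next
  case (Suc N)
  have "take (Suc N) Y = take N Y @ [Y ! N]"
    using Suc.prems by (simp add: take_Suc_conv_app_nth)
  then have "prefix_prob p (take (Suc N) Y) \<le> prefix_prob p (take N Y)"
    using prefix_prob_append_le[OF assms(1)] by metis
  moreover have "padded_prefix_prob p Y (Suc N)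
      = prefix_prob p (take N Y) * (prefix_prob p (take (Suc N) Y) / prefix_prob p (take N Y))"
    using Suc by (simp add: padded_prefix_prob_def prod.cl_ivl_Suc cond_prob_ybar_within)
  ultimately show ?case
    using mult_divide_cancel_of_le prefix_prob_nonneg[OF assms(1)] by metis
qed

lemma padded_prefix_prob_beyond:
  assumes "lang_model p" "length Y < N"
  shows "padded_prefix_prob p Y N = p Y"
  using assms(2)
proof (induction N)
  case 0
  then show ?case by simp
next
  case (Suc N)
  show ?case
  proof (cases "N = length Y")
    case True
    have "p Y \<le> prefix_prob p Y"
      using le_prefix_prob[OF assms(1), of Y "[]"] by simp
    moreover have "padded_prefix_prob p Y (Suc N) = prefix_prob p Y * (p Y / prefix_prob p Y)"
      using True padded_prefix_prob_within[OF assms(1), of N Y]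
      by (simp add: padded_prefix_prob_def prod.cl_ivl_Suc cond_prob_ybar_eos)
    ultimately show ?thesis
      using mult_divide_cancel_of_le lang_model_nonneg[OF assms(1)] by metis
  next
    case False
    then show ?thesis
      using Suc by (simp add: padded_prefix_prob_def prod.cl_ivl_Suc cond_prob_ybar_after_eos)
  qed
qed

lemma sum_ln_cond_prob_ratio:
  assumes p: "lang_model p" "0 < p Y" and q: "lang_model q" "0 < q Y"
  shows "(\<Sum>n = 1..N. ln (cond_prob p (ybar_lt Y n) (ybar Y n) / cond_prob q (ybar_lt Y n) (ybar Y n)))
    = ln (padded_prefix_prob p Y N / padded_prefix_prob q Y N)"
proof -
  let ?P = "\<lambda>n. cond_prob p (ybar_lt Y n) (ybar Y n)"
  let ?Q = "\<lambda>n. cond_prob q (ybar_lt Y n) (ybar Y n)"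
  have pos: "0 < ?P n" "0 < ?Q n" if "n \<in> {1..N}" for n
    using cond_prob_ybar_pos[OF p] cond_prob_ybar_pos[OF q] that by auto
  have "(\<Sum>n = 1..N. ln (?P n / ?Q n)) = (\<Sum>n = 1..N. ln (?P n)) - (\<Sum>n = 1..N. ln (?Q n))"
    unfolding sum_subtractf[symmetric]
  proof (rule sum.cong[OF refl])
    fix n assume "n \<in> {1..N}"
    then show "ln (?P n / ?Q n) = ln (?P n) - ln (?Q n)"
      by (intro ln_divide_pos pos)
  qed
  also have "\<dots> = ln (\<Prod>n = 1..N. ?P n) - ln (\<Prod>n = 1..N. ?Q n)"
    using pos by (subst (1 2) ln_prod) (auto simp: less_imp_neq[symmetric])
  also have "\<dots> = ln ((\<Prod>n = 1..N. ?P n) / (\<Prod>n = 1..N. ?Q n))"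
    using pos by (intro ln_divide_pos[symmetric] prod_pos) auto
  finally show ?thesis
    by (simp add: padded_prefix_prob_def)
qed

lemma mc_grad_trunc_eq_mc_grad:
  assumes lm_p: "\<And>\<theta>'. lang_model (p \<theta>')" and lm_q: "lang_model q"
    and pos: "\<And>m. m \<in> {1..M} \<Longrightarrow> 0 < p \<theta> (Y m) \<and> 0 < q (Y m)"
    and long: "\<And>m. m \<in> {1..M} \<Longrightarrow> length (Y m) < N"
  shows "mc_grad_trunc p q \<theta> M Y N = mc_grad p q \<theta> M Y"
proof -
  have "mc_grad_trunc p q \<theta> M Y N = (1 / real M) *\<^sub>R (\<Sum>m = 1..M.
      (\<Sum>n = 1..N. ln (cond_prob (p \<theta>) (ybar_lt (Y m) n) (ybar (Y m) n)
          / cond_prob q (ybar_lt (Y m) n) (ybar (Y m) n)))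
      *\<^sub>R grad (\<lambda>\<theta>'. ln (padded_prefix_prob (p \<theta>') (Y m) N)) \<theta>)"
    unfolding mc_grad_trunc_def scaleR_sum_right[symmetric] scaleR_sum_left
    by (subst sum.swap) simp
  also have "\<dots> = mc_grad p q \<theta> M Y"
    unfolding mc_grad_def
  proof (intro arg_cong[where f = "scaleR _"] sum.cong refl)
    fix m assume m: "m \<in> {1..M}"
    have "grad (\<lambda>\<theta>'. ln (padded_prefix_prob (p \<theta>') (Y m) N)) \<theta>
        = grad (\<lambda>\<theta>'. ln (p \<theta>' (Y m))) \<theta>"
      using padded_prefix_prob_beyond[OF lm_p long[OF m]] by simp
    moreover have "(\<Sum>n = 1..N. ln (cond_prob (p \<theta>) (ybar_lt (Y m) n) (ybar (Y m) n)
        / cond_prob q (ybar_lt (Y m) n) (ybar (Y m) n))) = ln (p \<theta> (Y m) / q (Y m))"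
      using sum_ln_cond_prob_ratio[OF lm_p _ lm_q] pos[OF m]
        padded_prefix_prob_beyond[OF lm_p long[OF m]] padded_prefix_prob_beyond[OF lm_q long[OF m]]
      by simp
    ultimately show "(\<Sum>n = 1..N. ln (cond_prob (p \<theta>) (ybar_lt (Y m) n) (ybar (Y m) n)
          / cond_prob q (ybar_lt (Y m) n) (ybar (Y m) n)))
        *\<^sub>R grad (\<lambda>\<theta>'. ln (padded_prefix_prob (p \<theta>') (Y m) N)) \<theta>
      = ln (p \<theta> (Y m) / q (Y m)) *\<^sub>R grad (\<lambda>\<theta>'. ln (p \<theta>' (Y m))) \<theta>"
      by simp
  qed
  finally show ?thesis .
qed

text \<open>Finiteness of the KL divergence is used only to get q(Y) > 0 for the samples.\<close>
theorem lemma3: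
  fixes p :: "'d::euclidean_space \<Rightarrow> 'a::finite list \<Rightarrow> real"
    and q :: "'a list \<Rightarrow> real"
    and \<theta> :: 'd and M :: nat and Y :: "nat \<Rightarrow> 'a list"
  assumes lm_p: "\<And>\<theta>'. lang_model (p \<theta>')"
    and lm_q: "lang_model q"
    and diff: "\<And>y \<theta>'. (\<lambda>t. p t y) differentiable (at \<theta>')"
    and kl: "kl_finite (p \<theta>) q"
    and M: "M \<ge> 1"
    and samples: "\<And>m. m \<in> {1..M} \<Longrightarrow> p \<theta> (Y m) > 0"
  shows "(\<lambda>N. mc_grad_trunc p q \<theta> M Y N) \<longlonglongrightarrow> mc_grad p q \<theta> M Y"
proof (rule tendsto_eventually)
  define L where "L = Max ((\<lambda>m. length (Y m)) ` {1..M})"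
  have pos: "0 < p \<theta> (Y m) \<and> 0 < q (Y m)" if "m \<in> {1..M}" for m
    using kl samples[OF that] by (simp add: kl_finite_def)
  have long: "length (Y m) < N" if "m \<in> {1..M}" "L < N" for m N
  proof -
    have "length (Y m) \<le> L"
      unfolding L_def using that(1) by (intro Max_ge) auto
    then show ?thesis
      using that(2) by simp
  qed
  show "\<forall>\<^sub>F N in sequentially. mc_grad_trunc p q \<theta> M Y N = mc_grad p q \<theta> M Y"
    using eventually_gt_at_top[of L]
  proof eventually_elim
    case (elim N)
    then show ?case
      by (intro mc_grad_trunc_eq_mc_grad lm_p lm_q pos long)
  qed
qed

end
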